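(* Let $d\ge2$ be an integer, $p\in(0,1]$, $\lambda\in(0,1)$, $b=1-(1-p)\lambda$, $\bar F$ the solution of $\bar F'(w)=\lambda(p\bar F(w)^d+(1-p)\bar F(w))-\bar F(w)$, $\bar F(0)=\lambda$, and $Q_\lambda=\int_0^\infty\bar F(w)\,dw$. Define $$\tilde Q_\lambda=\frac{\lambda}{b}\left(1+\frac1{d-1}\log\left(\frac{b}{b-p\lambda^d}\right)\right).$$ Then $$\tilde Q_\lambda-\frac{\lambda^{d+1}}{p(d-1)^2b^2}\cdot\frac{\pi^2}{6}\le Q_\lambda\le\tilde Q_\lambda.$$ *)

theory Defs
  imports "HOL-Analysis.Analysis"
begin

definition Qtilde :: "nat \<Rightarrow> real \<Rightarrow> real \<Rightarrow> real" where
  "Qtilde d p lam = (let b = 1 - (1 - p) * lam in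
     lam / b * (1 + 1 / (real d - 1) * ln (b / (b - p * lam ^ d))))"

end

theory Submission
  imports Defs "HOL-Real_Asymp.Real_Asymp"
begin

text \<open>Write \<open>n = d - 1\<close>. The substitution \<open>y = F\<^sup>-\<^sup>n\<close> linearises the Bernoulli equation, which
  gives \<open>F\<^sup>n = \<lambda>\<^sup>n \<tau>\<close> with \<open>\<tau> = 1 / (r + (1 - r) e\<^sup>k\<^sup>w)\<close>, \<open>r = p \<lambda>\<^sup>d / b\<close>, \<open>k = n b\<close>.
  As \<open>F\<^sup>d = \<lambda>\<^sup>n \<tau> F\<close>, the equation reads \<open>b F = p \<lambda>\<^sup>d \<tau> F - F'\<close>. Integrating it with
  \<open>\<lambda> (1 + ln \<tau> / n) \<le> F \<le> \<lambda>\<close> in the first term brackets \<open>Q\<^sub>\<lambda>\<close> between \<open>Qtilde\<close> and \<open>Qtilde\<close> minus a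
  multiple of \<open>\<integral> \<tau> ln (1/\<tau>)\<close>; substituting \<open>s = \<tau>\<close>, that integral is
  \<open>(1/k) \<Sum>\<^sub>j r\<^sup>j / (j+1)\<^sup>2 \<le> \<pi>\<^sup>2 / (6 k)\<close>.\<close>

lemma has_integral_real_derivative:
  assumes "a \<le> b"
    and "\<And>x. x \<in> {a..b} \<Longrightarrow> (f has_real_derivative f' x) (at x within {a..b})"
  shows "(f' has_integral (f b - f a)) {a..b}"
  using assms by (intro fundamental_theorem_of_calculus)
    (auto simp: has_real_derivative_iff_has_vector_derivative)

text \<open>Gronwall's argument: with \<open>a \<le> K\<close>, the function \<open>E\<^sup>2 e\<^sup>-\<^sup>2\<^sup>K\<^sup>x\<close> is non-increasing and vanishes at \<open>lo\<close>.\<close>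
lemma linear_ode_solution_vanishes:
  fixes E a :: "real \<Rightarrow> real"
  assumes "lo \<le> hi" and "E lo = 0" and "continuous_on {lo..hi} a"
    and E': "\<And>x. x \<in> {lo..hi} \<Longrightarrow> (E has_real_derivative a x * E x) (at x within {lo..hi})"
  shows "E hi = 0"
proof -
  obtain x0 where "x0 \<in> {lo..hi}" and K: "\<And>x. x \<in> {lo..hi} \<Longrightarrow> a x \<le> a x0"
    using continuous_attains_sup[OF compact_Icc _ assms(3)] assms(1) by auto
  define V where "V x = E x ^ 2 * exp (-2 * a x0 * x)" for x
  have V': "(V has_real_derivative 2 * (a x - a x0) * E x ^ 2 * exp (-2 * a x0 * x))
      (at x within {lo..hi})" if "x \<in> {lo..hi}" for x
    unfolding V_def
    by (rule derivative_eq_intros E'[OF that] refl)+ (simp add: algebra_simps power2_eq_square)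
  have "((\<lambda>x. 2 * (a x - a x0) * E x ^ 2 * exp (-2 * a x0 * x)) has_integral (V hi - V lo)) {lo..hi}"
    using assms(1) V' by (rule has_integral_real_derivative)
  moreover have "2 * (a x - a x0) * E x ^ 2 * exp (-2 * a x0 * x) \<le> 0" if "x \<in> {lo..hi}" for x
    using K[OF that] by (simp add: mult_nonpos_nonneg)
  ultimately have "V hi - V lo \<le> 0"
    using has_integral_le[OF _ has_integral_0] by blast
  with \<open>E lo = 0\<close> show ?thesis
    unfolding V_def by (simp add: mult_le_0_iff)
qed

lemma one_plus_ln_div_le_root:
  assumes "0 < n" and "0 < x"
  shows "1 + ln x / n \<le> root n x"
proof -
  have "root n x = exp (ln x / n)"
    using assms by (simp add: root_powr_inverse powr_def)
  then show ?thesis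
    using exp_ge_add_one_self by simp
qed

lemma nonneg_integrable_on_atLeast_bounded:
  fixes f :: "real \<Rightarrow> real"
  assumes int: "\<And>y. f integrable_on {a..y}" and nonneg: "\<And>x. a \<le> x \<Longrightarrow> 0 \<le> f x"
    and bounded: "\<And>y. a \<le> y \<Longrightarrow> integral {a..y} f \<le> B"
  shows "f integrable_on {a..}" and "((\<lambda>y. integral {a..y} f) \<longlongrightarrow> integral {a..} f) at_top"
proof -
  define g where "g y = integral {a..y} f" for y
  define l where "l = (SUP y\<in>{a..}. g y)"
  have bdd: "bdd_above (g ` {a..})"
    using bounded unfolding g_def by (auto intro!: bdd_aboveI)
  have mono: "g y \<le> g y'" if "a \<le> y" "y \<le> y'" for y y'
    unfolding g_def using that by (intro integral_subset_le int) (auto intro: nonneg)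
  have lim: "(g \<longlongrightarrow> l) at_top"
  proof (rule increasing_tendsto)
    show "eventually (\<lambda>y. g y \<le> l) at_top"
      using bdd unfolding l_def by (intro eventually_at_top_linorderI[of a] cSUP_upper) auto
    fix x assume "x < l"
    then obtain y0 where "a \<le> y0" "x < g y0"
      unfolding l_def using less_cSUP_iff[OF _ bdd] by auto
    then show "eventually (\<lambda>y. x < g y) at_top"
      using mono by (intro eventually_at_top_linorderI[of y0]) (auto intro: less_le_trans)
  qed
  have "(f has_integral l) {a..}"
    using lim unfolding g_def by (intro has_integral_to_inf int nonneg)
  then show "f integrable_on {a..}" and "((\<lambda>y. integral {a..y} f) \<longlongrightarrow> integral {a..} f) at_top"
    using lim unfolding g_def by (auto simp: integral_unique)
qed

definition power_log_primitive :: "nat \<Rightarrow> real \<Rightarrow> real" where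
  "power_log_primitive j s = s ^ Suc j * (1 / real (Suc j) ^ 2 - ln s / real (Suc j))"

lemma power_log_primitive_deriv:
  assumes "0 < s"
  shows "(power_log_primitive j has_real_derivative - (s ^ j * ln s)) (at s)"
proof -
  have "(power_log_primitive j has_real_derivative
      real (Suc j) * s ^ j * (1 / real (Suc j) ^ 2 - ln s / real (Suc j))
      + (- (1 / s) / real (Suc j)) * s ^ Suc j) (at s)"
    unfolding power_log_primitive_def[abs_def] using assms
    by (intro DERIV_mult derivative_eq_intros) auto
  moreover have "real (Suc j) * s ^ j * (1 / real (Suc j) ^ 2 - ln s / real (Suc j))
      + (- (1 / s) / real (Suc j)) * s ^ Suc j = - (s ^ j * ln s)"
    using assms by (simp add: field_simps power2_eq_square del: of_nat_Suc)
  ultimately show ?thesis by simp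
qed

lemma power_log_primitive_nonneg:
  assumes "0 < s" and "s \<le> 1"
  shows "0 \<le> power_log_primitive j s"
proof -
  have "ln s / real (Suc j) \<le> 0"
    using assms by (simp add: divide_nonpos_pos)
  also have "0 \<le> 1 / real (Suc j) ^ 2"
    by simp
  finally show ?thesis
    using assms unfolding power_log_primitive_def by (intro mult_nonneg_nonneg) auto
qed

lemma weighted_inverse_squares_le:
  fixes r :: real
  assumes "0 \<le> r" and "r \<le> 1"
  shows "(\<Sum>j<N. r ^ j / real (Suc j) ^ 2) \<le> pi^2 / 6"
proof -
  have sums: "(\<lambda>j. 1 / real (Suc j) ^ 2) sums (pi^2 / 6)"
    using inverse_squares_sums by (simp add: add.commute)
  have "(\<Sum>j<N. r ^ j / real (Suc j) ^ 2) \<le> (\<Sum>j<N. 1 / real (Suc j) ^ 2)"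
    using assms by (intro sum_mono divide_right_mono) (auto simp: power_le_one)
  also have "\<dots> \<le> (\<Sum>j. 1 / real (Suc j) ^ 2)"
    using sums by (intro sum_le_suminf) (auto simp: sums_iff)
  also have "\<dots> = pi^2 / 6"
    using sums by (simp add: sums_iff)
  finally show ?thesis .
qed

locale bernoulli_ode =
  fixes n :: nat and p lam :: real and F :: "real \<Rightarrow> real"
  assumes n_pos: "0 < n" and p_pos: "0 < p" and p_le_1: "p \<le> 1"
    and lam_pos: "0 < lam" and lam_less_1: "lam < 1"
    and F_0: "F 0 = lam"
    and F_deriv: "\<And>w. w \<ge> 0 \<Longrightarrow>
      (F has_real_derivative lam * (p * F w ^ Suc n + (1 - p) * F w) - F w) (at w within {0..})"
begin

definition "b = 1 - (1 - p) * lam"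
definition "r = p * lam ^ Suc n / b"
definition "k = real n * b"
definition "D w = r + (1 - r) * exp (k * w)"
definition "tau w = 1 / D w"

lemma b_pos: "0 < b" and p_le_b: "p \<le> b"
proof -
  have "(1 - p) * lam \<le> 1 - p"
    using p_le_1 lam_less_1 by (simp add: mult_left_le)
  then show "p \<le> b"
    unfolding b_def by simp
  with p_pos show "0 < b"
    by simp
qed

lemma r_pos: "0 < r" and r_less_1: "r < 1"
proof -
  have "lam ^ Suc n < 1"
    using lam_pos lam_less_1 by (rule power_Suc_less_one)
  then have "p * lam ^ Suc n < b"
    using p_pos p_le_b by (smt (verit) mult_less_cancel_left2)
  then show "0 < r" "r < 1"
    using p_pos lam_pos b_pos unfolding r_def by (simp_all add: divide_less_eq)
qed

lemma k_pos: "0 < k"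
  using n_pos b_pos unfolding k_def by simp

lemma b_times_r: "b * r = p * lam ^ Suc n"
  using b_pos unfolding r_def by simp

lemma D_pos: "0 < D w"
  using r_pos r_less_1 unfolding D_def by (simp add: add_pos_nonneg)

lemma D_0: "D 0 = 1"
  unfolding D_def by simp

lemma D_mono: "w \<le> v \<Longrightarrow> D w \<le> D v"
  unfolding D_def using r_less_1 k_pos by (simp add: mult_left_mono)

lemma one_le_D: "0 \<le> w \<Longrightarrow> 1 \<le> D w"
  using D_mono[of 0 w] D_0 by simp

lemma D_deriv: "(D has_real_derivative k * (D w - r)) (at w)"
  unfolding D_def by (auto intro!: derivative_eq_intros)

lemma tau_pos: "0 < tau w"
  using D_pos unfolding tau_def by simp

lemma tau_le_1: "0 \<le> w \<Longrightarrow> tau w \<le> 1"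
  using one_le_D[of w] unfolding tau_def by simp

lemma ln_tau: "ln (tau w) = - ln (D w)"
  using D_pos unfolding tau_def by (simp add: ln_div)

lemma tau_deriv: "(tau has_real_derivative - k * tau w * (1 - r * tau w)) (at w)"
  unfolding tau_def[abs_def] using D_pos[of w]
  by (auto intro!: derivative_eq_intros D_deriv simp: field_simps power2_eq_square)

lemma F_continuous: "continuous_on {0..} F"
  using F_deriv by (rule DERIV_continuous_on) auto

lemma F_power_D_deriv:
  assumes "0 \<le> w"
  shows "((\<lambda>w. F w ^ n * D w - lam ^ n) has_real_derivative
    real n * p * lam * F w ^ n * (F w ^ n * D w - lam ^ n)) (at w within {0..})"
proof -
  obtain m where n: "n = Suc m"
    using n_pos gr0_implies_Suc by blast
  have D': "(D has_real_derivative real n * (b * D w - p * lam ^ Suc n)) (at w)"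
    using D_deriv[of w] b_times_r unfolding k_def by (simp add: algebra_simps)
  show ?thesis
    by (rule derivative_eq_intros F_deriv[OF assms] DERIV_subset[OF D' subset_UNIV] refl)+
      (simp add: algebra_simps n b_def)
qed

lemma F_power_times_D:
  assumes "0 \<le> w"
  shows "F w ^ n * D w = lam ^ n"
proof -
  have "F w ^ n * D w - lam ^ n = 0"
  proof (rule linear_ode_solution_vanishes[where E = "\<lambda>v. F v ^ n * D v - lam ^ n"
        and a = "\<lambda>v. real n * p * lam * F v ^ n" and lo = 0])
    show "continuous_on {0..w} (\<lambda>v. real n * p * lam * F v ^ n)"
      using F_continuous by (intro continuous_intros) (auto elim: continuous_on_subset)
    show "((\<lambda>v. F v ^ n * D v - lam ^ n) has_real_derivative
        real n * p * lam * F v ^ n * (F v ^ n * D v - lam ^ n)) (at v within {0..w})"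
      if "v \<in> {0..w}" for v
      using that by (intro DERIV_subset[OF F_power_D_deriv]) auto
  qed (use assms F_0 D_0 in simp_all)
  then show ?thesis
    by simp
qed

lemma F_pos:
  assumes "0 \<le> w"
  shows "0 < F w"
proof (rule ccontr)
  assume "\<not> 0 < F w"
  moreover have "continuous_on {0..w} F"
    using F_continuous by (rule continuous_on_subset) auto
  ultimately obtain v where "0 \<le> v" and "F v = 0"
    using IVT2'[of F w 0 0] assms F_0 lam_pos by force
  then show False
    using F_power_times_D[of v] n_pos lam_pos by (simp add: zero_power)
qed

lemma F_power_eq:
  assumes "0 \<le> w"
  shows "F w ^ n = lam ^ n * tau w"
  using F_power_times_D[OF assms] D_pos[of w] unfolding tau_def by (simp add: eq_divide_eq)

lemma F_eq_root_tau:
  assumes "0 \<le> w"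
  shows "F w = lam * root n (tau w)"
proof -
  have "F w = root n (lam ^ n * tau w)"
    using F_power_eq[OF assms] F_pos[OF assms] n_pos by (metis less_imp_le real_root_power_cancel)
  also have "\<dots> = lam * root n (tau w)"
    using lam_pos n_pos by (simp add: real_root_mult real_root_power_cancel)
  finally show ?thesis .
qed

lemma F_le_lam: "0 \<le> w \<Longrightarrow> F w \<le> lam"
  using F_eq_root_tau[of w] tau_le_1[of w] n_pos lam_pos by simp

lemma lam_minus_F_le:
  assumes "0 \<le> w"
  shows "lam - F w \<le> lam * ln (D w) / real n"
proof -
  have "1 - ln (D w) / real n \<le> root n (tau w)"
    using one_plus_ln_div_le_root[OF n_pos tau_pos] ln_tau by simp
  then have "lam * 1 \<le> lam * (root n (tau w) + ln (D w) / real n)"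
    using lam_pos by (intro mult_left_mono) auto
  then show ?thesis
    using F_eq_root_tau[OF assms] by (simp add: algebra_simps)
qed

lemma tau_tendsto_0: "(tau \<longlongrightarrow> 0) at_top"
  unfolding tau_def[abs_def] D_def using k_pos r_pos r_less_1 by real_asymp

lemma F_tendsto_0: "(F \<longlongrightarrow> 0) at_top"
proof -
  have "((\<lambda>w. lam * root n (tau w)) \<longlongrightarrow> lam * root n 0) at_top"
    by (intro tendsto_intros tau_tendsto_0)
  moreover have "eventually (\<lambda>w. lam * root n (tau w) = F w) at_top"
    using F_eq_root_tau by (intro eventually_at_top_linorderI[of 0]) simp
  ultimately show ?thesis
    by (simp add: tendsto_cong)
qed

text \<open>Since \<open>k \<tau> ln D = \<tau>' ln \<tau> / (1 - r \<tau>)\<close>, expanding the denominator geometrically gives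
  \<open>k \<tau> ln D = - (\<Sum>\<^sub>j r\<^sup>j power_log_primitive j \<tau>)'\<close>; \<open>log_series_partial N\<close> is the
  \<open>N\<close>-th partial sum, and its value \<open>\<Sum>\<^sub>j\<^sub><\<^sub>N r\<^sup>j / (j+1)\<^sup>2\<close> at \<open>w = 0\<close> is where \<open>\<pi>\<^sup>2/6\<close> comes from.\<close>
definition "log_series_partial N w = (\<Sum>j<N. r ^ j * power_log_primitive j (tau w))"

lemma log_series_partial_deriv:
  "(log_series_partial N has_real_derivative - k * tau w * ln (D w) * (1 - (r * tau w) ^ N)) (at w)"
proof (induction N)
  case 0
  show ?case
    unfolding log_series_partial_def[abs_def] by simp
next
  case (Suc N)
  have "((\<lambda>w. power_log_primitive N (tau w)) has_real_derivative
      - (tau w ^ N * ln (tau w)) * (- k * tau w * (1 - r * tau w))) (at w)"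
    by (rule DERIV_chain2[OF power_log_primitive_deriv[OF tau_pos] tau_deriv])
  then have "((\<lambda>w. log_series_partial N w + r ^ N * power_log_primitive N (tau w))
      has_real_derivative
      - k * tau w * ln (D w) * (1 - (r * tau w) ^ N)
      + r ^ N * (- (tau w ^ N * ln (tau w)) * (- k * tau w * (1 - r * tau w)))) (at w)"
    by (intro DERIV_add Suc DERIV_cmult)
  then show ?case
    unfolding log_series_partial_def[abs_def] ln_tau
    by (simp add: algebra_simps power_mult_distrib)
qed

lemma log_series_partial_0_le: "log_series_partial N 0 \<le> pi^2 / 6"
proof -
  have "log_series_partial N 0 = (\<Sum>j<N. r ^ j / real (Suc j) ^ 2)"
    unfolding log_series_partial_def power_log_primitive_def tau_def D_0 by simp
  also have "\<dots> \<le> pi^2 / 6"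
    using r_pos r_less_1 by (intro weighted_inverse_squares_le) auto
  finally show ?thesis .
qed

lemma log_series_partial_nonneg: "0 \<le> w \<Longrightarrow> 0 \<le> log_series_partial N w"
  unfolding log_series_partial_def using r_pos tau_pos[of w] tau_le_1[of w]
  by (intro sum_nonneg mult_nonneg_nonneg power_log_primitive_nonneg) auto

lemma tau_ln_D_continuous: "continuous_on S (\<lambda>w. tau w * ln (D w))"
proof -
  have "continuous_on S tau" and "continuous_on S D"
    using tau_deriv D_deriv by (meson DERIV_isCont continuous_at_imp_continuous_on)+
  then show ?thesis
    using D_pos by (intro continuous_intros) (auto simp: less_imp_neq[symmetric])
qed

lemma tau_ln_D_geometric_term_le:
  assumes "0 \<le> w" and "w \<le> T"
  shows "tau w * (r * tau w) ^ N * ln (D w) \<le> r ^ N * ln (D T)"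
proof -
  have "tau w ^ Suc N \<le> 1"
    using assms tau_pos[of w] tau_le_1[of w] by (intro power_le_one) auto
  then have "tau w * (r * tau w) ^ N \<le> r ^ N"
    using r_pos mult_left_mono[of "tau w ^ Suc N" 1 "r ^ N"]
    by (simp add: power_mult_distrib mult.left_commute)
  moreover have "0 \<le> ln (D w)" and "ln (D w) \<le> ln (D T)"
    using assms one_le_D[of w] D_pos[of w] D_mono[of w T] by auto
  ultimately show ?thesis
    using r_pos by (intro mult_mono) auto
qed

lemma integral_tau_ln_D_le_geometric:
  assumes "0 \<le> T"
  shows "k * integral {0..T} (\<lambda>w. tau w * ln (D w)) \<le> pi^2 / 6 + T * (k * ln (D T) * r ^ N)"
proof -
  define C where "C = k * ln (D T) * r ^ N"
  define \<Phi> where "\<Phi> = log_series_partial N"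
  have "((\<lambda>w. - k * tau w * ln (D w) * (1 - (r * tau w) ^ N)) has_integral \<Phi> T - \<Phi> 0) {0..T}"
    unfolding \<Phi>_def using assms
    by (intro has_integral_real_derivative DERIV_subset[OF log_series_partial_deriv]) auto
  moreover have "((\<lambda>w. C) has_integral T * C) {0..T}"
    using has_integral_const_real[of C 0 T] assms by simp
  ultimately have rhs: "((\<lambda>w. C - (- k * tau w * ln (D w) * (1 - (r * tau w) ^ N)))
      has_integral T * C - (\<Phi> T - \<Phi> 0)) {0..T}"
    by (intro has_integral_diff)
  have lhs: "((\<lambda>w. k * (tau w * ln (D w)))
      has_integral k * integral {0..T} (\<lambda>w. tau w * ln (D w))) {0..T}"
    by (intro has_integral_mult_right integrable_integral integrable_continuous_interval
        tau_ln_D_continuous)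
  have "k * (tau w * ln (D w)) \<le> C - (- k * tau w * ln (D w) * (1 - (r * tau w) ^ N))"
    if "w \<in> {0..T}" for w
  proof -
    have "k * (tau w * (r * tau w) ^ N * ln (D w)) \<le> k * (r ^ N * ln (D T))"
      using that k_pos tau_ln_D_geometric_term_le[of w T N] by (intro mult_left_mono) auto
    moreover have "C - (- k * tau w * ln (D w) * (1 - (r * tau w) ^ N)) - k * (tau w * ln (D w))
        = k * (r ^ N * ln (D T)) - k * (tau w * (r * tau w) ^ N * ln (D w))"
      unfolding C_def by (simp add: algebra_simps)
    ultimately show ?thesis
      by linarith
  qed
  then have "k * integral {0..T} (\<lambda>w. tau w * ln (D w)) \<le> T * C - (\<Phi> T - \<Phi> 0)"
    by (rule has_integral_le[OF lhs rhs])
  then show ?thesis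
    using log_series_partial_0_le[of N] log_series_partial_nonneg[OF assms, of N]
    unfolding C_def \<Phi>_def by linarith
qed

lemma integral_tau_ln_D_le:
  assumes "0 \<le> T"
  shows "integral {0..T} (\<lambda>w. tau w * ln (D w)) \<le> pi^2 / (6 * k)"
proof -
  have "(\<lambda>N. pi^2 / 6 + T * (k * ln (D T) * r ^ N)) \<longlonglongrightarrow> pi^2 / 6 + T * (k * ln (D T) * 0)"
    using r_pos r_less_1 by (intro tendsto_intros LIMSEQ_power_zero) auto
  then have "k * integral {0..T} (\<lambda>w. tau w * ln (D w)) \<le> pi^2 / 6"
    using integral_tau_ln_D_le_geometric[OF assms] by (intro LIMSEQ_le_const) auto
  then show ?thesis
    using k_pos by (simp add: field_simps)
qed

definition "tau_primitive w = (w - ln (D w) / k) / r"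

lemma tau_primitive_0: "tau_primitive 0 = 0"
  unfolding tau_primitive_def D_0 by simp

lemma tau_primitive_deriv: "(tau_primitive has_real_derivative tau w) (at w)"
  unfolding tau_primitive_def[abs_def] tau_def using D_pos[of w] k_pos r_pos
  by (auto intro!: derivative_eq_intros D_deriv simp: field_simps)

lemma tau_primitive_le: "tau_primitive w \<le> - ln (1 - r) / (k * r)"
proof -
  have "ln ((1 - r) * exp (k * w)) \<le> ln (D w)"
    using r_pos r_less_1 D_pos[of w] unfolding D_def by simp
  then have "k * w - ln (D w) \<le> - ln (1 - r)"
    using r_less_1 by (simp add: ln_mult)
  then have "(k * w - ln (D w)) / k / r \<le> - ln (1 - r) / k / r"
    using k_pos r_pos by (intro divide_right_mono) auto
  then show ?thesis
    unfolding tau_primitive_def using k_pos by (simp add: diff_divide_distrib)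
qed

lemma tau_primitive_tendsto: "(tau_primitive \<longlongrightarrow> - ln (1 - r) / (k * r)) at_top"
proof -
  have "(tau_primitive \<longlongrightarrow> - (ln (1 - r) * inverse k * inverse r)) at_top"
    unfolding tau_primitive_def[abs_def] D_def using k_pos r_pos r_less_1 by real_asymp
  then show ?thesis
    by (simp add: field_simps)
qed

text \<open>\<open>upper T\<close> bounds \<open>\<integral>\<^sub>0\<^sup>T F\<close> from above; it comes from integrating
  \<open>b F = p \<lambda>\<^bsup>n+1\<^esup> \<tau> F - F'\<close> after replacing \<open>F\<close> by \<open>\<lambda>\<close> in the first term.\<close>
definition "upper w = (p * lam ^ Suc (Suc n) * tau_primitive w + lam - F w) / b"
definition "upper' w =
  (p * lam ^ Suc (Suc n) * tau w - (lam * (p * F w ^ Suc n + (1 - p) * F w) - F w)) / b"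

lemma upper_0: "upper 0 = 0"
  unfolding upper_def tau_primitive_0 F_0 by simp

lemma upper_deriv: "0 \<le> w \<Longrightarrow> (upper has_real_derivative upper' w) (at w within {0..})"
  unfolding upper_def[abs_def] upper'_def
  by (rule derivative_eq_intros F_deriv DERIV_subset[OF tau_primitive_deriv subset_UNIV] refl
      | assumption)+ (use b_pos in \<open>auto simp: field_simps\<close>)

lemma upper'_eq:
  assumes "0 \<le> w"
  shows "upper' w = F w + p * lam ^ Suc n * tau w * (lam - F w) / b"
proof -
  have "p * lam ^ Suc (Suc n) * tau w - (lam * (p * F w ^ Suc n + (1 - p) * F w) - F w)
      = b * F w + p * lam ^ Suc n * tau w * (lam - F w)"
    using F_power_eq[OF assms] unfolding b_def by (simp add: algebra_simps)
  then show ?thesis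
    unfolding upper'_def using b_pos by (simp add: add_divide_distrib)
qed

lemma F_le_upper': "0 \<le> w \<Longrightarrow> F w \<le> upper' w"
  using upper'_eq[of w] F_le_lam[of w] p_pos lam_pos tau_pos[of w] b_pos by simp

lemma upper'_le:
  assumes "0 \<le> w"
  shows "upper' w \<le> F w + p * lam ^ Suc (Suc n) / (real n * b) * (tau w * ln (D w))"
proof -
  have "p * lam ^ Suc n * tau w * (lam - F w) / b
      \<le> p * lam ^ Suc n * tau w * (lam * ln (D w) / real n) / b"
    using lam_minus_F_le[OF assms] p_pos lam_pos tau_pos[of w] b_pos
    by (intro divide_right_mono mult_left_mono) auto
  then show ?thesis
    unfolding upper'_eq[OF assms] using n_pos by (simp add: field_simps)
qed

lemma F_integrable: "F integrable_on {0..T}"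
  using F_continuous by (intro integrable_continuous_interval) (auto elim: continuous_on_subset)

lemma upper'_has_integral:
  assumes "0 \<le> T"
  shows "(upper' has_integral upper T) {0..T}"
proof -
  have "(upper' has_integral upper T - upper 0) {0..T}"
    using assms by (intro has_integral_real_derivative DERIV_subset[OF upper_deriv]) auto
  then show ?thesis
    by (simp add: upper_0)
qed

lemma integral_F_le_upper: "0 \<le> T \<Longrightarrow> integral {0..T} F \<le> upper T"
  by (rule has_integral_le[OF integrable_integral[OF F_integrable] upper'_has_integral])
    (auto intro: F_le_upper')

lemma upper_le_integral_F:
  assumes "0 \<le> T"
  shows "upper T - p * lam ^ Suc (Suc n) / (real n ^ 2 * b ^ 2) * (pi^2 / 6) \<le> integral {0..T} F"
proof -
  define c where "c = p * lam ^ Suc (Suc n) / (real n * b)"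
  have "((\<lambda>w. F w + c * (tau w * ln (D w))) has_integral
      integral {0..T} F + c * integral {0..T} (\<lambda>w. tau w * ln (D w))) {0..T}"
    by (intro has_integral_add has_integral_mult_right integrable_integral F_integrable
        integrable_continuous_interval tau_ln_D_continuous)
  then have "upper T \<le> integral {0..T} F + c * integral {0..T} (\<lambda>w. tau w * ln (D w))"
    using upper'_le unfolding c_def
    by (intro has_integral_le[OF upper'_has_integral[OF assms]]) auto
  also have "\<dots> \<le> integral {0..T} F + c * (pi^2 / (6 * k))"
    using integral_tau_ln_D_le[OF assms] p_pos lam_pos n_pos b_pos unfolding c_def
    by (intro add_left_mono mult_left_mono) auto
  finally show ?thesis
    unfolding c_def k_def by (simp add: field_simps power2_eq_square)
qed

lemma Qtilde_eq:
  "Qtilde (Suc n) p lam = (p * lam ^ Suc (Suc n) * (- ln (1 - r) / (k * r)) + lam) / b"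
proof -
  have "1 - r = (b - p * lam ^ Suc n) / b"
    using b_pos unfolding r_def by (simp add: diff_divide_distrib)
  then have ln_eq: "- ln (1 - r) = ln (b / (b - p * lam ^ Suc n))"
    using r_less_1 b_pos by (simp add: ln_div)
  have ratio: "p * lam ^ Suc (Suc n) / (k * r) = lam / real n"
    using b_times_r b_pos n_pos p_pos lam_pos unfolding k_def by (simp add: mult.assoc)
  have "p * lam ^ Suc (Suc n) * (- ln (1 - r) / (k * r))
      = p * lam ^ Suc (Suc n) / (k * r) * (- ln (1 - r))"
    by simp
  also have "\<dots> = lam / real n * ln (b / (b - p * lam ^ Suc n))"
    unfolding ratio ln_eq ..
  finally have limit: "p * lam ^ Suc (Suc n) * (- ln (1 - r) / (k * r))
      = lam / real n * ln (b / (b - p * lam ^ Suc n))" .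
  have "Qtilde (Suc n) p lam = lam / b * (1 + 1 / real n * ln (b / (b - p * lam ^ Suc n)))"
    unfolding Qtilde_def Let_def b_def[symmetric] by simp
  then show ?thesis
    unfolding limit using b_pos n_pos by (simp add: field_simps)
qed

lemma upper_le_Qtilde:
  assumes "0 \<le> T"
  shows "upper T \<le> Qtilde (Suc n) p lam"
proof -
  have "p * lam ^ Suc (Suc n) * tau_primitive T
      \<le> p * lam ^ Suc (Suc n) * (- ln (1 - r) / (k * r))"
    using tau_primitive_le p_pos lam_pos by (intro mult_left_mono) auto
  then show ?thesis
    unfolding Qtilde_eq upper_def using F_pos[OF assms] b_pos by (intro divide_right_mono) auto
qed

lemma upper_tendsto: "(upper \<longlongrightarrow> Qtilde (Suc n) p lam) at_top"
proof -
  have "((\<lambda>w. (p * lam ^ Suc (Suc n) * tau_primitive w + lam - F w) / b) \<longlongrightarrow>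
      (p * lam ^ Suc (Suc n) * (- ln (1 - r) / (k * r)) + lam - 0) / b) at_top"
    using b_pos by (intro tendsto_intros tau_primitive_tendsto F_tendsto_0) auto
  then show ?thesis
    unfolding Qtilde_eq upper_def[abs_def] by simp
qed

lemma integral_F_bounds:
  "F integrable_on {0..} \<and>
    Qtilde (Suc n) p lam - p * lam ^ Suc (Suc n) / (real n ^ 2 * b ^ 2) * (pi^2 / 6)
      \<le> integral {0..} F \<and>
    integral {0..} F \<le> Qtilde (Suc n) p lam"
proof -
  have bounded: "integral {0..T} F \<le> Qtilde (Suc n) p lam" if "0 \<le> T" for T
    using integral_F_le_upper[OF that] upper_le_Qtilde[OF that] by linarith
  have F_nonneg: "0 \<le> w \<Longrightarrow> 0 \<le> F w" for w
    using F_pos less_imp_le by blast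
  note partial_integrals_tendsto =
    nonneg_integrable_on_atLeast_bounded(2)[OF F_integrable F_nonneg bounded]
  have "integral {0..} F \<le> Qtilde (Suc n) p lam"
    using bounded by (intro tendsto_upperbound[OF partial_integrals_tendsto]
        eventually_at_top_linorderI[of 0]) auto
  moreover have "Qtilde (Suc n) p lam - p * lam ^ Suc (Suc n) / (real n ^ 2 * b ^ 2) * (pi^2 / 6)
      \<le> integral {0..} F"
    using upper_le_integral_F
    by (intro tendsto_le[OF _ partial_integrals_tendsto
          tendsto_diff[OF upper_tendsto tendsto_const]] eventually_at_top_linorderI[of 0]) auto
  ultimately show ?thesis
    using nonneg_integrable_on_atLeast_bounded(1)[OF F_integrable F_nonneg bounded] by blast
qed

end

theorem proposition4p8:
  fixes d :: nat and p lam :: real and F :: "real \<Rightarrow> real"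
  assumes "d \<ge> 2" and "0 < p" and "p \<le> 1" and "0 < lam" and "lam < 1"
    and "F 0 = lam"
    and "\<And>w. w \<ge> 0 \<Longrightarrow>
      (F has_real_derivative (lam * (p * F w ^ d + (1 - p) * F w) - F w)) (at w within {0..})"
  shows "F integrable_on {0..} \<and>
    Qtilde d p lam - lam ^ (d + 1) / (p * (real d - 1)^2 * (1 - (1 - p) * lam)^2) * (pi^2 / 6)
      \<le> integral {0..} F \<and>
    integral {0..} F \<le> Qtilde d p lam"
proof -
  define n where "n = d - 1"
  have d: "d = Suc n" and "0 < n"
    using assms(1) unfolding n_def by auto
  interpret bernoulli_ode n p lam F
    using assms unfolding d by unfold_locales auto
  \<comment> \<open>The argument yields the error term with a factor \<open>p\<close>; the stated one has \<open>1/p \<ge> p\<close>.\<close>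
  have "p * p \<le> 1"
    using assms(2,3) by (simp add: mult_le_one)
  then have "p * lam ^ Suc (Suc n) / (real n ^ 2 * b ^ 2)
      \<le> lam ^ Suc (Suc n) / (p * real n ^ 2 * b ^ 2)"
    using assms(2,4) b_pos \<open>0 < n\<close> by (simp add: field_simps)
  also have "\<dots> = lam ^ (d + 1) / (p * (real d - 1)^2 * (1 - (1 - p) * lam)^2)"
    unfolding d b_def by simp
  finally have "p * lam ^ Suc (Suc n) / (real n ^ 2 * b ^ 2) * (pi^2 / 6)
      \<le> lam ^ (d + 1) / (p * (real d - 1)^2 * (1 - (1 - p) * lam)^2) * (pi^2 / 6)"
    by (intro mult_right_mono) auto
  then show ?thesis
    using integral_F_bounds unfolding d
    by (elim conjE, intro conjI) (assumption, linarith, assumption)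
qed
end
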